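(* Let $G=(U,V,E)$ be a finite bipartite graph, $F\subseteq E$, and let $(E_r,E_b)$ be an $(A,B,C)$-free bipartition of the set $E_c$ of committed edges of $G$. Let $G-F=(U,V,E\setminus F)$. Then there are no alternating cycles of $E_r$ relative to $G-F$.
   Context: $\hat{E}=\{uv: u\in U,\ v\in V,\ uv\notin E\}$. Two edges $u_1v_1,u_2v_2\in E$ ($u_i\in U$, $v_i\in V$) are in conflict in $G$ if $u_1v_2\notin E$ and $u_2v_1\notin E$. An edge is committed if it is in conflict with some other edge of $E$. A bipartition of $E_c$ is a pair $(E_r,E_b)$ with $E_r\cap E_b=\emptyset$, $E_r\cup E_b=E_c$, $F\cap E_c\subseteq E_b$. It is $(A,B,C)$-free if there are no $u_1,u_2\in U$, $v_1,v_2\in V$ forming: $(A_1)$: $u_1v_1,u_2v_2\in E_r$, $u_1v_2,u_2v_1\in\hat{E}$; $(A_2)$: $u_1v_1,u_2v_2\in E_b$, $u_1v_2,u_2v_1\in\hat{E}$; $(B_1)$: $u_1v_1,u_2v_2\in E_r$, $u_1v_2\in\hat{E}$, $u_2v_1\in E_b$; $(B_2)$: $u_1v_1,u_2v_2\in E_b$, $u_1v_2\in\hat{E}$, $u_2v_1\in E_r$; $(C)$: $u_1v_1,u_2v_2\in E_r$, $u_1v_2\in\hat{E}$, $u_2v_1\in F$. For a bipartite graph $H=(U,V,E_H)$, $M\subseteq E_H$ and $k\ge2$, an alternating cycle of $M$ relative to $H$ is a set of $k$ distinct vertices $u_0,\dots,u_{k-1}\in U$ and $k$ distinct vertices $v_0,\dots,v_{k-1}\in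 V$ with $u_iv_i\notin E_H$ and $u_{i+1}v_i\in M$ for all $0\le i<k$ (indices modulo $k$). *)

theory Defs
  imports Main
begin

definition nonedges :: "'u set \<Rightarrow> 'v set \<Rightarrow> ('u \<times> 'v) set \<Rightarrow> ('u \<times> 'v) set" where
  "nonedges U V E = {(u,v). u \<in> U \<and> v \<in> V \<and> (u,v) \<notin> E}"

definition in_conflict :: "('u \<times> 'v) set \<Rightarrow> ('u \<times> 'v) \<Rightarrow> ('u \<times> 'v) \<Rightarrow> bool" where
  "in_conflict E e1 e2 \<longleftrightarrow> e1 \<in> E \<and> e2 \<in> E \<and>
     (fst e1, snd e2) \<notin> E \<and> (fst e2, snd e1) \<notin> E"

definition committed :: "('u \<times> 'v) set \<Rightarrow> ('u \<times> 'v) set" where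
  "committed E = {e \<in> E. \<exists>e' \<in> E. e' \<noteq> e \<and> in_conflict E e e'}"

definition is_bipartition :: "('u \<times> 'v) set \<Rightarrow> ('u \<times> 'v) set \<Rightarrow> ('u \<times> 'v) set \<Rightarrow> ('u \<times> 'v) set \<Rightarrow> bool" where
  "is_bipartition E F Er Eb \<longleftrightarrow> Er \<inter> Eb = {} \<and> Er \<union> Eb = committed E \<and> F \<inter> committed E \<subseteq> Eb"

definition ABC_free :: "'u set \<Rightarrow> 'v set \<Rightarrow> ('u \<times> 'v) set \<Rightarrow> ('u \<times> 'v) set \<Rightarrow> ('u \<times> 'v) set \<Rightarrow> ('u \<times> 'v) set \<Rightarrow> bool" where
  "ABC_free U V E F Er Eb \<longleftrightarrow>
    \<not> (\<exists>u1\<in>U. \<exists>u2\<in>U. \<exists>v1\<in>V. \<exists>v2\<in>V.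
      ((u1,v1) \<in> Er \<and> (u2,v2) \<in> Er \<and> (u1,v2) \<in> nonedges U V E \<and> (u2,v1) \<in> nonedges U V E) \<or>
      ((u1,v1) \<in> Eb \<and> (u2,v2) \<in> Eb \<and> (u1,v2) \<in> nonedges U V E \<and> (u2,v1) \<in> nonedges U V E) \<or>
      ((u1,v1) \<in> Er \<and> (u2,v2) \<in> Er \<and> (u1,v2) \<in> nonedges U V E \<and> (u2,v1) \<in> Eb) \<or>
      ((u1,v1) \<in> Eb \<and> (u2,v2) \<in> Eb \<and> (u1,v2) \<in> nonedges U V E \<and> (u2,v1) \<in> Er) \<or>
      ((u1,v1) \<in> Er \<and> (u2,v2) \<in> Er \<and> (u1,v2) \<in> nonedges U V E \<and> (u2,v1) \<in> F))"

definition alternating_cycle :: "'u set \<Rightarrow> 'v set \<Rightarrow> ('u \<times> 'v) set \<Rightarrow> ('u \<times> 'v) set \<Rightarrow> nat \<Rightarrow> (nat \<Rightarrow> 'u) \<Rightarrow> (nat \<Rightarrow> 'v) \<Rightarrow> bool" where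
  "alternating_cycle U V EH M k u v \<longleftrightarrow> k \<ge> 2 \<and>
     inj_on u {..<k} \<and> inj_on v {..<k} \<and>
     (\<forall>i<k. u i \<in> U \<and> v i \<in> V \<and> (u i, v i) \<notin> EH \<and> (u ((i + 1) mod k), v i) \<in> M)"

end

theory Submission
  imports Defs
begin

text \<open>Shortening an alternating cycle at a non-edge \<open>u_i v_i\<close> of \<open>G - F\<close> replaces the red edges
  \<open>u_i v_(i-1)\<close> and \<open>u_(i+1) v_i\<close> by the chord \<open>u_(i+1) v_(i-1)\<close>. The forbidden configurations
  (A), (B), (C) show that the red edges together with all such chords form a set of edges of
  \<open>G - F\<close> that is closed under this exchange. So the cycle can be shortened down to a single pair
  \<open>u_0 v_0\<close> which would be both an edge and a non-edge of \<open>G - F\<close>.\<close>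

definition exchange_closed :: "('a \<times> 'b) set \<Rightarrow> ('a \<times> 'b) set \<Rightarrow> bool" where
  "exchange_closed X Y \<longleftrightarrow>
     (\<forall>x1 y1 x2 y2. (x1,y1) \<in> X \<longrightarrow> (x2,y2) \<in> X \<longrightarrow> (x1,y2) \<notin> Y \<longrightarrow> (x2,y1) \<in> X)"

lemma closed_alternating_walk_impossible:
  assumes "X \<subseteq> Y" and "exchange_closed X Y"
    and "\<forall>i\<le>m. (u i, v i) \<notin> Y" and "\<forall>i<m. (u (Suc i), v i) \<in> X" and "(u 0, v m) \<in> X"
  shows False
  using assms(3-5)
proof (induction m)
  case 0
  then show ?case using assms(1) by auto
next
  case (Suc m)
  have "(u 0, v m) \<in> X"
    using assms(2) Suc.prems unfolding exchange_closed_def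
    by (metis le_refl lessI)
  then show ?case using Suc by simp
qed

definition red_extension :: "('u \<times> 'v) set \<Rightarrow> ('u \<times> 'v) set \<Rightarrow> ('u \<times> 'v) set" where
  "red_extension E R = R \<union> {(c,b). \<exists>a d. (a,b) \<in> R \<and> (c,d) \<in> R \<and> (a,d) \<notin> E}"

lemma red_extensionI:
  "(a,b) \<in> R \<Longrightarrow> (c,d) \<in> R \<Longrightarrow> (a,d) \<notin> E \<Longrightarrow> (c,b) \<in> red_extension E R"
  unfolding red_extension_def by blast

locale abc_free_bipartition =
  fixes U :: "'u set" and V :: "'v set" and E F Er Eb :: "('u \<times> 'v) set"
  assumes edges_bipartite: "E \<subseteq> U \<times> V" and F_subset: "F \<subseteq> E"
    and bipartition: "is_bipartition E F Er Eb" and abc_free: "ABC_free U V E F Er Eb"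
begin

lemma red_in_E: "(x,y) \<in> Er \<Longrightarrow> (x,y) \<in> E"
  using bipartition unfolding is_bipartition_def committed_def by blast

lemma blue_in_E: "(x,y) \<in> Eb \<Longrightarrow> (x,y) \<in> E"
  using bipartition unfolding is_bipartition_def committed_def by blast

lemma F_not_red: "(x,y) \<in> F \<Longrightarrow> (x,y) \<notin> Er"
  using bipartition unfolding is_bipartition_def by blast

lemma conflict_committed:
  assumes "(x,y) \<in> E" "(p,q) \<in> E" "(x,q) \<notin> E" "(p,y) \<notin> E"
  shows "(x,y) \<in> Er \<or> (x,y) \<in> Eb"
proof -
  have "(x,y) \<in> committed E"
    using assms unfolding committed_def in_conflict_def by force
  then show ?thesis using bipartition unfolding is_bipartition_def by blast
qed

lemma no_A1: "(u1,v1) \<in> Er \<Longrightarrow> (u2,v2) \<in> Er \<Longrightarrow> (u1,v2) \<notin> E \<Longrightarrow> (u2,v1) \<notin> E \<Longrightarrow> False"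
  using abc_free edges_bipartite red_in_E unfolding ABC_free_def nonedges_def by blast

lemma no_A2: "(u1,v1) \<in> Eb \<Longrightarrow> (u2,v2) \<in> Eb \<Longrightarrow> (u1,v2) \<notin> E \<Longrightarrow> (u2,v1) \<notin> E \<Longrightarrow> False"
  using abc_free edges_bipartite blue_in_E unfolding ABC_free_def nonedges_def by blast

lemma no_B1: "(u1,v1) \<in> Er \<Longrightarrow> (u2,v2) \<in> Er \<Longrightarrow> (u1,v2) \<notin> E \<Longrightarrow> (u2,v1) \<in> Eb \<Longrightarrow> False"
  using abc_free edges_bipartite red_in_E unfolding ABC_free_def nonedges_def by blast

lemma no_B2: "(u1,v1) \<in> Eb \<Longrightarrow> (u2,v2) \<in> Eb \<Longrightarrow> (u1,v2) \<notin> E \<Longrightarrow> (u2,v1) \<in> Er \<Longrightarrow> False"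
  using abc_free edges_bipartite blue_in_E unfolding ABC_free_def nonedges_def by blast

lemma no_C: "(u1,v1) \<in> Er \<Longrightarrow> (u2,v2) \<in> Er \<Longrightarrow> (u1,v2) \<notin> E \<Longrightarrow> (u2,v1) \<in> F \<Longrightarrow> False"
  using abc_free edges_bipartite red_in_E unfolding ABC_free_def nonedges_def by blast

lemma red_conflicts_with_blue:
  assumes "(x,y) \<in> Er"
  obtains p q where "(p,q) \<in> Eb" "(x,q) \<notin> E" "(p,y) \<notin> E"
proof -
  have "(x,y) \<in> committed E"
    using assms bipartition unfolding is_bipartition_def by blast
  then obtain p q where pq: "(p,q) \<in> E" "(x,q) \<notin> E" "(p,y) \<notin> E"
    unfolding committed_def in_conflict_def by fastforce
  have "(p,q) \<in> Er \<or> (p,q) \<in> Eb"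
    using conflict_committed pq red_in_E[OF assms] by blast
  then show ?thesis using that pq no_A1[OF assms _ pq(2,3)] by blast
qed

lemma red_exchange_at_F:
  assumes r1: "(x1,y1) \<in> Er" and r2: "(x2,y2) \<in> Er" and f: "(x1,y2) \<in> F"
  shows "(x2,y1) \<in> Er"
proof -
  have x2y1: "(x2,y1) \<in> E" using no_C[OF r2 r1 _ f] by blast
  obtain p q where pq: "(p,q) \<in> Eb" "(x2,q) \<notin> E" "(p,y2) \<notin> E"
    using red_conflicts_with_blue[OF r2] .
  obtain p' q' where pq': "(p',q') \<in> Eb" "(x1,q') \<notin> E" "(p',y1) \<notin> E"
    using red_conflicts_with_blue[OF r1] .
  have x1q: "(x1,q) \<in> E"
  proof (rule ccontr)
    assume "(x1,q) \<notin> E"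
    then have "(x1,y2) \<in> Eb"
      using conflict_committed[OF _ blue_in_E[OF pq(1)] _ pq(3)] f F_subset F_not_red by blast
    then show False using no_A2 pq \<open>(x1,q) \<notin> E\<close> by blast
  qed
  show ?thesis
  proof (cases "(x2,q') \<in> E")
    case False
    then have "(x2,y1) \<in> Er \<or> (x2,y1) \<in> Eb"
      using conflict_committed[OF x2y1 blue_in_E[OF pq'(1)] _ pq'(3)] by blast
    moreover have "(x2,y1) \<notin> Eb" using no_A2[OF _ pq'(1) False pq'(3)] by blast
    ultimately show ?thesis by blast
  next
    case True
    have "(x1,q) \<in> Er \<or> (x1,q) \<in> Eb"
      using conflict_committed[OF x1q True pq'(2) pq(2)] .
    then have x1q_blue: "(x1,q) \<in> Eb" using no_C[OF r2 _ pq(2) f] by blast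
    then have "(p',q) \<in> E" using no_A2[OF _ pq'(1) pq'(2)] by blast
    then have "(x2,y1) \<in> Er \<or> (x2,y1) \<in> Eb"
      using conflict_committed[OF x2y1 _ pq(2) pq'(3)] by blast
    moreover have "(x2,y1) \<notin> Eb" using no_B2[OF _ x1q_blue pq(2) r1] by blast
    ultimately show ?thesis by blast
  qed
qed

lemma red_exchange_at_nonedge:
  assumes r1: "(x1,y1) \<in> Er" and r_a2: "(a2,y2) \<in> Er" and r_d2: "(x2,d2) \<in> Er"
    and a2d2: "(a2,d2) \<notin> E" and x1y2: "(x1,y2) \<notin> E"
  shows "(x2,y1) \<in> red_extension E Er"
proof -
  consider "(x2,y2) \<in> Er" | "(x1,d2) \<notin> E" | "(x2,y2) \<notin> Er" "(x1,d2) \<in> E" by blast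
  then show ?thesis
  proof cases
    case 1
    then show ?thesis using red_extensionI[OF r1 _ x1y2] by blast
  next
    case 2
    then show ?thesis using red_extensionI[OF r1 r_d2] by blast
  next
    case 3
    \<comment> \<open>\<open>x2 y2\<close> is then an uncommitted edge, which forces \<open>x1 d2\<close> into a conflict that
      admits neither colour\<close>
    have x2y2: "(x2,y2) \<in> E" using no_A1[OF r_d2 r_a2 _ a2d2] by blast
    have "(x2,y2) \<notin> Eb" using no_B1[OF r_a2 r_d2 a2d2] by blast
    with 3(1) have uncommitted: "(x2,q) \<in> E \<or> (p,y2) \<in> E" if "(p,q) \<in> E" for p q
      using conflict_committed[OF x2y2 that] by blast
    obtain p q where pq: "(p,q) \<in> Eb" "(x2,q) \<notin> E" "(p,d2) \<notin> E"
      using red_conflicts_with_blue[OF r_d2] .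
    have "(x1,q) \<notin> E" using uncommitted[of x1 q] pq(2) x1y2 by blast
    then have "(x1,d2) \<in> Er \<or> (x1,d2) \<in> Eb"
      using conflict_committed[OF 3(2) blue_in_E[OF pq(1)] _ pq(3)] by blast
    then show ?thesis
      using no_A1[OF _ r_a2 x1y2 a2d2] no_A2[OF _ pq(1) \<open>(x1,q) \<notin> E\<close> pq(3)] by blast
  qed
qed

lemma red_extension_subset: "red_extension E Er \<subseteq> E - F"
proof clarify
  fix c b assume cb: "(c,b) \<in> red_extension E Er"
  show "(c,b) \<in> E - F"
  proof (cases "(c,b) \<in> Er")
    case True
    then show ?thesis using red_in_E F_not_red by blast
  next
    case False
    then obtain a d where "(a,b) \<in> Er" "(c,d) \<in> Er" "(a,d) \<notin> E"
      using cb unfolding red_extension_def by blast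
    then show ?thesis using no_A1 no_C by blast
  qed
qed

lemma red_exchange:
  assumes r1: "(x1,y1) \<in> Er" and X2: "(x2,y2) \<in> red_extension E Er"
    and x1y2: "(x1,y2) \<notin> E - F"
  shows "(x2,y1) \<in> red_extension E Er"
proof (cases "(x1,y2) \<in> F")
  case True
  show ?thesis
  proof (cases "(x2,y2) \<in> Er")
    case True
    then show ?thesis
      using red_exchange_at_F[OF r1 _ \<open>(x1,y2) \<in> F\<close>] unfolding red_extension_def by blast
  next
    case False
    then obtain a2 d2 where "(a2,y2) \<in> Er" "(x2,d2) \<in> Er" "(a2,d2) \<notin> E"
      using X2 unfolding red_extension_def by blast
    then show ?thesis
      using red_exchange_at_F[OF r1 _ \<open>(x1,y2) \<in> F\<close>] red_extensionI by metis
  qed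
next
  case False
  then have "(x1,y2) \<notin> E" using x1y2 by blast
  then show ?thesis
    using X2 red_extensionI[OF r1 _ \<open>(x1,y2) \<notin> E\<close>] red_exchange_at_nonedge[OF r1]
    unfolding red_extension_def by blast
qed

lemma red_extension_exchange_closed: "exchange_closed (red_extension E Er) (E - F)"
  unfolding exchange_closed_def
proof clarify
  fix x1 y1 x2 y2
  assume X1: "(x1,y1) \<in> red_extension E Er" and X2: "(x2,y2) \<in> red_extension E Er"
    and x1y2: "(x1,y2) \<notin> E - F"
  show "(x2,y1) \<in> red_extension E Er"
  proof (cases "(x1,y1) \<in> Er")
    case True
    then show ?thesis using red_exchange X2 x1y2 by blast
  next
    case False
    then obtain a1 d1 where a1: "(a1,y1) \<in> Er" and d1: "(x1,d1) \<in> Er" and a1d1: "(a1,d1) \<notin> E"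
      using X1 unfolding red_extension_def by blast
    have "(x2,d1) \<in> red_extension E Er" using red_exchange[OF d1 X2 x1y2] .
    then show ?thesis using red_exchange[OF a1] a1d1 by blast
  qed
qed

end

theorem lemma6:
  fixes U :: "'u set" and V :: "'v set" and E F Er Eb :: "('u \<times> 'v) set"
  assumes "finite U" and "finite V" and "E \<subseteq> U \<times> V" and "F \<subseteq> E"
    and "is_bipartition E F Er Eb" and "ABC_free U V E F Er Eb"
  shows "\<not> (\<exists>k u v. alternating_cycle U V (E - F) Er k u v)"
proof
  assume "\<exists>k u v. alternating_cycle U V (E - F) Er k u v"
  then obtain k u v where cycle: "alternating_cycle U V (E - F) Er k u v" by blast
  interpret abc_free_bipartition U V E F Er Eb
    using assms(3-6) by unfold_locales
  define m where "m = k - 1"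
  have k: "k = Suc m" using cycle unfolding alternating_cycle_def m_def by simp
  have cycle_step: "(u i, v i) \<notin> E - F" "(u (Suc i mod k), v i) \<in> Er" if "i < k" for i
    using cycle that unfolding alternating_cycle_def by auto
  have "\<forall>i\<le>m. (u i, v i) \<notin> E - F"
    using cycle_step(1) unfolding k by (simp add: less_Suc_eq_le)
  moreover have "\<forall>i<m. (u (Suc i), v i) \<in> red_extension E Er"
  proof (intro allI impI)
    fix i assume "i < m"
    then have "i < k" "Suc i mod k = Suc i" unfolding k by simp_all
    then show "(u (Suc i), v i) \<in> red_extension E Er"
      using cycle_step(2) unfolding red_extension_def by fastforce
  qed
  moreover have "(u 0, v m) \<in> red_extension E Er"
    using cycle_step(2)[of m] unfolding k red_extension_def by simp
  ultimately show False
    by (rule closed_alternating_walk_impossible[OF red_extension_subset red_extension_exchange_closed])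
qed

end
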